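(* Let $\mathfrak M$ be a Banach manifold (modelled on $X$) with chart family $\mathscr A$, and $\mathfrak M_0$ (modelled on $X_0$) a $C^1$-embedded Banach submanifold of $\mathfrak M$ with respect to $\mathscr A$. Assume $(\mathfrak M,\mathfrak M_0,\mathscr A)$ is inward spreadable with an inner $C^1$-kernel $\mathfrak M_1$. Then for every $\eta\in\mathfrak M_0$ and any three $(\mathfrak M_0,\mathfrak M_1)$-regular local charts $(\mathcal U,\varphi),(\mathcal V,\psi),(\mathcal W,\chi)$ of $\mathfrak M$ at $\eta$, $$(\varphi\circ\chi^{-1})'(\chi(\eta))=(\varphi\circ\psi^{-1})'(\psi(\eta))\,(\psi\circ\chi^{-1})'(\chi(\eta))\quad\text{in }L(X),$$ and in particular $(\varphi\circ\psi^{-1})'(\psi(\eta))=\big[(\psi\circ\varphi^{-1})'(\varphi(\eta))\big]^{-1}$.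
   Context: Densely embedded spaces and the class $\mathfrak C^k$. For Banach spaces $X$ and $X_0$, $X_0$ is a densely embedded Banach subspace of $X$ if $X_0$ is a dense linear subspace of $X$ and there is $C>0$ with $\|x\|_X\le C\|x\|_{X_0}$ for $x\in X_0$. For such $X_0\subseteq X$, a Banach space $Y$, an open set $U_0\subseteq X_0$ and an integer $k\ge1$, $\mathfrak C^k(U_0;X,Y)$ denotes the set of maps $F:U_0\to Y$ such that (i) for each $x_0\in U_0$ there are bounded symmetric $j$-linear maps $F^{(j)}(x_0):X^j\to Y$, $1\le j\le k$, with $\|F(x)-F(x_0)-\sum_{j=1}^k\frac1{j!}F^{(j)}(x_0)(x-x_0,\dots,x-x_0)\|_Y/\|x-x_0\|_{X_0}^k\to0$ as $\|x-x_0\|_{X_0}\to0$, and (ii) $x\mapsto F^{(j)}(x)$ is continuous from $U_0$ (with the $X_0$-topology) into the space $L^j(X,Y)$ of bounded $j$-linear maps. We write $F'=F^{(1)}$. Embedded submanifolds. Let $\mathfrak M,\mathfrak M_0$ be topological Banach manifolds modelled on $X$, $X_0$, let $\mathscr A$ be a family of local charts of $\mathfrak M$, and $k\ge1$. $\mathfrak M_0$ is a $C^k$-embedded Banach submanifold of $\mathfrak M$ with respect to $\mathscr A$ if: (D1) $X_0$ is a densely embedded Banach subspace of $X$; (D2) $\mathfrak M_0\subseteq\mathfrak M$ and $\mathcal U\cap\mathfrak M_0$ is open in $\mathfrak M_0$ for every open $\mathcal U\subseteq\mathfrak M$; (D3) the domains of the charts of $\mathscr A$ cover $\mathfrak M$;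 (D4) for $\eta\in\mathfrak M_0$ and $(\mathcal U,\varphi)\in\mathscr A$ with $\eta\in\mathcal U$, $(\mathcal U_0,\varphi|_{\mathcal U_0})$ with $\mathcal U_0:=\mathcal U\cap\mathfrak M_0$ is a local chart of $\mathfrak M_0$; (D5) for $\eta\in\mathfrak M_0$ and $(\mathcal U,\varphi),(\mathcal V,\psi)\in\mathscr A$ with $\eta\in\mathcal U\cap\mathcal V$, $\psi\circ\varphi^{-1}\in\mathfrak C^k(\varphi(\mathcal U_0\cap\mathcal V_0);X,X)$ and $\varphi\circ\psi^{-1}\in\mathfrak C^k(\psi(\mathcal U_0\cap\mathcal V_0);X,X)$. A chart of $\mathscr A$ whose domain contains $\eta$ is an $\mathfrak M_0$-regular local chart at $\eta$. $(\mathfrak M,\mathfrak M_0,\mathscr A)$ (with $\mathfrak M_0$ $C^1$-embedded) is inward spreadable if there is a Banach manifold $\mathfrak M_1\subseteq\mathfrak M_0$, modelled on a Banach space $X_1$, which is a $C^1$-embedded Banach submanifold of $\mathfrak M_0$ with respect to the restrictions to $\mathfrak M_0$ of the charts of $\mathscr A$ ($\mathfrak M_1$ is then an inner $C^1$-kernel and the charts of $\mathscr A$ are called $(\mathfrak M_0,\mathfrak M_1)$-regular). For charts at $\eta\in\mathfrak M_0$, $(\varphi\circ\psi^{-1})'(\psi(\eta))\in L(X)$ is the first derivative in the $\mathfrak C^1$ sense. *)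

theory Defs
  imports "HOL-Analysis.Analysis"
begin

text \<open>A densely embedded Banach
subspace X0 of X is represented by a type 'b together with the embedding
j :: 'b => 'a (bounded, linear, injective, dense range); X0 is identified with range j.\<close>

definition densely_embedded :: "('b::banach \<Rightarrow> 'a::banach) \<Rightarrow> bool" where
  "densely_embedded j \<longleftrightarrow> bounded_linear j \<and> inj j \<and> closure (range j) = UNIV"

definition is_chart :: "'m topology \<Rightarrow> 'm set \<Rightarrow> ('m \<Rightarrow> 'a::banach) \<Rightarrow> bool" where
  "is_chart M U \<phi> \<longleftrightarrow> openin M U \<and> open (\<phi> ` U) \<and>
     homeomorphic_map (subtopology M U) (top_of_set (\<phi> ` U)) \<phi>"

definition banach_manifold :: "'m topology \<Rightarrow> 'a::banach itself \<Rightarrow> bool" where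
  "banach_manifold M _ \<longleftrightarrow> (\<forall>x\<in>topspace M. \<exists>U (\<phi>::'m \<Rightarrow> 'a). is_chart M U \<phi> \<and> x \<in> U)"

definition C1_deriv_at ::
  "('b::banach \<Rightarrow> 'a::banach) \<Rightarrow> 'b set \<Rightarrow> ('b \<Rightarrow> 'c::banach) \<Rightarrow> 'b \<Rightarrow> ('a \<Rightarrow>\<^sub>L 'c) \<Rightarrow> bool" where
  "C1_deriv_at j U0 F x0 L \<longleftrightarrow>
     ((\<lambda>x. norm (F x - F x0 - blinfun_apply L (j x - j x0)) / norm (x - x0)) \<longlongrightarrow> 0)
       (at x0 within U0)"

definition frakC1 :: "('b::banach \<Rightarrow> 'a::banach) \<Rightarrow> 'b set \<Rightarrow> ('b \<Rightarrow> 'c::banach) \<Rightarrow> bool" where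
  "frakC1 j U0 F \<longleftrightarrow> open U0 \<and>
     (\<exists>F' :: 'b \<Rightarrow> ('a \<Rightarrow>\<^sub>L 'c). (\<forall>x0\<in>U0. C1_deriv_at j U0 F x0 (F' x0)) \<and> continuous_on U0 F')"

text \<open>The first derivative F'(x0) in L(X,Y) (unique since range j is dense).\<close>

definition C1_deriv ::
  "('b::banach \<Rightarrow> 'a::banach) \<Rightarrow> 'b set \<Rightarrow> ('b \<Rightarrow> 'c::banach) \<Rightarrow> 'b \<Rightarrow> ('a \<Rightarrow>\<^sub>L 'c)" where
  "C1_deriv j U0 F x0 = (THE L. C1_deriv_at j U0 F x0 L)"

text \<open>Transition map psi o phi^{-1} restricted to phi(U0 \<inter> V0), seen as a map on X0
(points of X0 are elements of 'b, identified with their image under j).\<close>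

definition trans_dom :: "('b \<Rightarrow> 'a) \<Rightarrow> 'm topology \<Rightarrow> 'm set \<Rightarrow> ('m \<Rightarrow> 'a) \<Rightarrow> 'm set \<Rightarrow> 'b set" where
  "trans_dom j M0 U \<phi> V = (\<lambda>m. inv j (\<phi> m)) ` (U \<inter> V \<inter> topspace M0)"

definition trans_map :: "('b \<Rightarrow> 'a) \<Rightarrow> 'm set \<Rightarrow> ('m \<Rightarrow> 'a) \<Rightarrow> ('m \<Rightarrow> 'a) \<Rightarrow> 'b \<Rightarrow> 'a" where
  "trans_map j U \<phi> \<psi> = (\<lambda>x. \<psi> (inv_into U \<phi> (j x)))"

definition C1_embedded ::
  "'m topology \<Rightarrow> 'm topology \<Rightarrow> ('b::banach \<Rightarrow> 'a::banach) \<Rightarrow> ('m set \<times> ('m \<Rightarrow> 'a)) set \<Rightarrow> bool" where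
  "C1_embedded M M0 j A \<longleftrightarrow>
     densely_embedded j \<and>
     topspace M0 \<subseteq> topspace M \<and> (\<forall>U. openin M U \<longrightarrow> openin M0 (U \<inter> topspace M0)) \<and>
     (\<forall>(U,\<phi>)\<in>A. is_chart M U \<phi>) \<and>
     topspace M \<subseteq> \<Union>(fst ` A) \<and>
     (\<forall>\<eta>\<in>topspace M0. \<forall>(U,\<phi>)\<in>A. \<eta> \<in> U \<longrightarrow>
        \<phi> ` (U \<inter> topspace M0) \<subseteq> range j \<and> is_chart M0 (U \<inter> topspace M0) (inv j \<circ> \<phi>)) \<and>
     (\<forall>\<eta>\<in>topspace M0. \<forall>(U,\<phi>)\<in>A. \<forall>(V,\<psi>)\<in>A. \<eta> \<in> U \<inter> V \<longrightarrow>
        frakC1 j (trans_dom j M0 U \<phi> V) (trans_map j U \<phi> \<psi>) \<and>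
        frakC1 j (trans_dom j M0 V \<psi> U) (trans_map j V \<psi> \<phi>))"

definition restrict_charts ::
  "('b \<Rightarrow> 'a) \<Rightarrow> 'm topology \<Rightarrow> ('m set \<times> ('m \<Rightarrow> 'a)) set \<Rightarrow> ('m set \<times> ('m \<Rightarrow> 'b)) set" where
  "restrict_charts j M0 A = (\<lambda>(U,\<phi>). (U \<inter> topspace M0, inv j \<circ> \<phi>)) ` A"

definition inner_C1_kernel ::
  "'m topology \<Rightarrow> ('b::banach \<Rightarrow> 'a::banach) \<Rightarrow> ('m set \<times> ('m \<Rightarrow> 'a)) set
   \<Rightarrow> 'm topology \<Rightarrow> ('d::banach \<Rightarrow> 'b) \<Rightarrow> bool" where
  "inner_C1_kernel M0 j A M1 j1 \<longleftrightarrow>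
     banach_manifold M1 TYPE('d) \<and> C1_embedded M0 M1 j1 (restrict_charts j M0 A)"

text \<open>(phi o psi^{-1})'(psi(eta)) in L(X).\<close>

definition trans_deriv ::
  "('b::banach \<Rightarrow> 'a::banach) \<Rightarrow> 'm topology \<Rightarrow> 'm set \<Rightarrow> ('m \<Rightarrow> 'a) \<Rightarrow> 'm set \<Rightarrow> ('m \<Rightarrow> 'a)
   \<Rightarrow> 'm \<Rightarrow> ('a \<Rightarrow>\<^sub>L 'a)" where
  "trans_deriv j M0 V \<psi> U \<phi> \<eta> =
     C1_deriv j (trans_dom j M0 V \<psi> U) (trans_map j V \<psi> \<phi>) (inv j (\<psi> \<eta>))"

end

theory Submission
  imports Defs
begin

text \<open>Transition maps between regular charts are differentiable from X0 into X, with
derivatives in L(X) depending continuously on the X0-point. Integrating along segments, this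
continuity makes the remainder of such a map small relative to the X-norm of the increment;
that is exactly what the chain rule needs, because the inner transition map is only known to
be continuous in X0 and differentiable into X. Derivatives are unique since X0 is dense in X,
and the inverse formula is the chain rule with a repeated chart, the transition from a chart
to itself being the embedding.\<close>

lemma C1_deriv_at_iff_has_derivative:
  assumes "bounded_linear j"
  shows "C1_deriv_at j S F x0 L \<longleftrightarrow> (F has_derivative (\<lambda>h. L (j h))) (at x0 within S)"
proof -
  have "(\<lambda>x. norm (F x - F x0 - L (j x - j x0)) / norm (x - x0)) =
        (\<lambda>x. norm (F x - F x0 - L (j (x - x0))) / norm (x - x0))"
    using assms by (simp add: linear_diff bounded_linear.linear)
  moreover have "bounded_linear (\<lambda>h. L (j h))"
    using assms by (rule bounded_linear_compose[OF blinfun.bounded_linear_right])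
  ultimately show ?thesis
    unfolding C1_deriv_at_def has_derivative_iff_norm by simp
qed

lemma blinfun_eq_on_dense_range:
  fixes L L' :: "'a::real_normed_vector \<Rightarrow>\<^sub>L 'c::real_normed_vector"
  assumes "closure (range j) = UNIV" and "\<And>h. L (j h) = L' (j h)"
  shows "L = L'"
proof -
  have "closed {a. L a = L' a}"
    by (intro closed_Collect_eq) (auto intro: continuous_intros)
  moreover have "range j \<subseteq> {a. L a = L' a}" using assms(2) by auto
  ultimately have "closure (range j) \<subseteq> {a. L a = L' a}" by (rule closure_minimal[rotated])
  then show ?thesis using assms(1) by (auto intro: blinfun_eqI)
qed

lemma C1_deriv_eqI:
  assumes "densely_embedded j" "open S" "x \<in> S" "C1_deriv_at j S F x L"
  shows "C1_deriv j S F x = L"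
  unfolding C1_deriv_def
proof (rule the_equality)
  have bl: "bounded_linear j" using assms(1) by (simp add: densely_embedded_def)
  have at_x: "at x within S = at x" using assms(2,3) by (rule at_within_open[rotated])
  fix L' assume "C1_deriv_at j S F x L'"
  then have "(F has_derivative (\<lambda>h. L' (j h))) (at x)"
    using C1_deriv_at_iff_has_derivative[OF bl] at_x by metis
  moreover have "(F has_derivative (\<lambda>h. L (j h))) (at x)"
    using assms(4) C1_deriv_at_iff_has_derivative[OF bl] at_x by metis
  ultimately have "\<And>h. L' (j h) = L (j h)" by (metis has_derivative_unique)
  then show "L' = L"
    using assms(1) unfolding densely_embedded_def by (blast intro: blinfun_eq_on_dense_range)
qed (fact assms(4))

lemma frakC1_has_derivative:
  fixes j :: "'b::banach \<Rightarrow> 'a::banach" and F :: "'b \<Rightarrow> 'c::banach"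
  assumes "densely_embedded j" "frakC1 j S F"
  obtains D :: "'b \<Rightarrow> ('a \<Rightarrow>\<^sub>L 'c)" where "open S" "continuous_on S D"
    "\<And>x. x \<in> S \<Longrightarrow> (F has_derivative (\<lambda>h. D x (j h))) (at x)"
    "\<And>x. x \<in> S \<Longrightarrow> C1_deriv j S F x = D x"
proof -
  obtain D where S: "open S" and D: "\<forall>x\<in>S. C1_deriv_at j S F x (D x)" "continuous_on S D"
    using assms(2) unfolding frakC1_def by blast
  have "bounded_linear j" using assms(1) by (simp add: densely_embedded_def)
  then have "(F has_derivative (\<lambda>h. D x (j h))) (at x)" if "x \<in> S" for x
    using D(1) that C1_deriv_at_iff_has_derivative at_within_open[OF that S] by metis
  with S D show thesis
    using that C1_deriv_eqI[OF assms(1) S] by blast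
qed

lemma remainder_bound_on_segment:
  fixes F :: "'b::real_normed_vector \<Rightarrow> 'c::real_normed_vector"
    and D :: "'b \<Rightarrow> ('a::real_normed_vector \<Rightarrow>\<^sub>L 'c)"
  assumes bl: "bounded_linear j"
    and der: "\<And>t. t \<in> {0..1} \<Longrightarrow> (F has_derivative (\<lambda>h. D (y + t *\<^sub>R v) (j h))) (at (y + t *\<^sub>R v))"
    and close: "\<And>t. t \<in> {0..1} \<Longrightarrow> norm (D (y + t *\<^sub>R v) - D y) \<le> e"
  shows "norm (F (y + v) - F y - D y (j v)) \<le> e * norm (j v)"
proof -
  define f' where "f' t = (\<lambda>h::real. h *\<^sub>R D (y + t *\<^sub>R v) (j v))" for t
  have "((\<lambda>t. F (y + t *\<^sub>R v)) has_derivative f' t) (at t within {0..1})" if "t \<in> {0..1}" for t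
  proof -
    have "((\<lambda>t. y + t *\<^sub>R v) has_derivative (\<lambda>h. h *\<^sub>R v)) (at t within {0..1})"
      by (auto intro!: derivative_eq_intros)
    from has_derivative_compose[OF this der[OF that]] show ?thesis
      using bl by (simp add: f'_def linear_scale bounded_linear.linear blinfun.scaleR_right)
  qed
  moreover have "onorm (f' t - f' 0) \<le> e * norm (j v)" if "t \<in> {0..1}" for t
  proof -
    have "f' t - f' 0 = (\<lambda>h. h *\<^sub>R (D (y + t *\<^sub>R v) - D y) (j v))"
      by (auto simp: f'_def fun_diff_def blinfun.diff_left algebra_simps)
    then have "onorm (f' t - f' 0) = norm ((D (y + t *\<^sub>R v) - D y) (j v))"
      using onorm_scaleR_left[of "\<lambda>h. h"] by (simp add: onorm_id)
    also have "\<dots> \<le> norm (D (y + t *\<^sub>R v) - D y) * norm (j v)" by (rule norm_blinfun)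
    also have "\<dots> \<le> e * norm (j v)" using close[OF that] by (simp add: mult_right_mono)
    finally show ?thesis .
  qed
  ultimately have "norm (F (y + 1 *\<^sub>R v) - F (y + 0 *\<^sub>R v) - f' 0 (1 - 0)) \<le> norm (1 - 0::real) * (e * norm (j v))"
    by (intro differentiable_bound_linearization[where S="{0..1}"]) auto
  then show ?thesis by (simp add: f'_def)
qed

lemma continuous_derivative_remainder_tendsto:
  fixes F :: "'b::real_normed_vector \<Rightarrow> 'c::real_normed_vector"
    and D :: "'b \<Rightarrow> ('a::real_normed_vector \<Rightarrow>\<^sub>L 'c)"
  assumes bl: "bounded_linear j" and S: "open S" "y0 \<in> S"
    and der: "\<And>y. y \<in> S \<Longrightarrow> (F has_derivative (\<lambda>h. D y (j h))) (at y)"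
    and cont: "continuous_on S D"
  shows "((\<lambda>y. norm (F y - F y0 - D y0 (j y - j y0)) / norm (j y - j y0)) \<longlongrightarrow> 0) (nhds y0)"
  \<comment> \<open>the quotient is 0 where j y = j y0, and continuity of D makes it small elsewhere\<close>
proof (rule tendstoI)
  fix e :: real assume "e > 0"
  obtain d where d: "d > 0" "ball y0 d \<subseteq> S" "\<And>y. y \<in> ball y0 d \<Longrightarrow> dist (D y) (D y0) < e / 2"
  proof -
    obtain d1 where "d1 > 0" "\<forall>y\<in>S. dist y y0 < d1 \<longrightarrow> dist (D y) (D y0) < e / 2"
      using cont S(2) \<open>e > 0\<close> unfolding continuous_on_iff by (meson half_gt_zero)
    moreover obtain d2 where "d2 > 0" "ball y0 d2 \<subseteq> S"
      using S open_contains_ball by blast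
    ultimately show thesis
      by (intro that[of "min d1 d2"]) (auto simp: dist_commute subset_iff)
  qed
  have "norm (F y - F y0 - D y0 (j y - j y0)) / norm (j y - j y0) < e" if y: "y \<in> ball y0 d" for y
  proof -
    have seg: "y0 + t *\<^sub>R (y - y0) \<in> ball y0 d" if "t \<in> {0..1}" for t
      using y that convex_ball[of y0 d] centre_in_ball[of y0 d] d(1)
      by (auto simp: convex_alt algebra_simps)
    have "norm (F (y0 + (y - y0)) - F y0 - D y0 (j (y - y0))) \<le> e / 2 * norm (j (y - y0))"
    proof (rule remainder_bound_on_segment[OF bl])
      fix t :: real assume "t \<in> {0..1}"
      then have z: "y0 + t *\<^sub>R (y - y0) \<in> ball y0 d" by (rule seg)
      with d(2) have "y0 + t *\<^sub>R (y - y0) \<in> S" by blast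
      then show "(F has_derivative (\<lambda>h. D (y0 + t *\<^sub>R (y - y0)) (j h))) (at (y0 + t *\<^sub>R (y - y0)))"
        by (rule der)
      from d(3)[OF z] show "norm (D (y0 + t *\<^sub>R (y - y0)) - D y0) \<le> e / 2"
        by (simp add: dist_norm)
    qed
    then have "norm (F y - F y0 - D y0 (j y - j y0)) / norm (j y - j y0) \<le> e / 2"
      using bl \<open>e > 0\<close> by (simp add: linear_diff bounded_linear.linear divide_le_eq)
    then show ?thesis
      using \<open>e > 0\<close> by linarith
  qed
  then have "\<forall>\<^sub>F y in nhds y0. norm (F y - F y0 - D y0 (j y - j y0)) / norm (j y - j y0) < e"
    unfolding eventually_nhds_metric using d(1) by (auto simp: dist_commute)
  then show "\<forall>\<^sub>F y in nhds y0. dist (norm (F y - F y0 - D y0 (j y - j y0)) / norm (j y - j y0)) 0 < e"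
    by eventually_elim (use \<open>e > 0\<close> in simp)
qed

lemma has_derivative_compose_through_injection:
  fixes j :: "'b::topological_space \<Rightarrow> 'a::real_normed_vector" and G :: "'e::real_normed_vector \<Rightarrow> 'b"
    and F :: "'b \<Rightarrow> 'c::real_normed_vector" and D :: "'a \<Rightarrow>\<^sub>L 'c"
  assumes inj: "inj j"
    \<comment> \<open>G need only be continuous, since F's remainder is measured where j \<circ> G is differentiable\<close>
    and F: "((\<lambda>y. norm (F y - F (G x) - D (j y - j (G x))) / norm (j y - j (G x))) \<longlongrightarrow> 0) (nhds (G x))"
    and jG: "((\<lambda>z. j (G z)) has_derivative L) (at x)"
    and G: "isCont G x"
  shows "((\<lambda>z. F (G z)) has_derivative (\<lambda>h. D (L h))) (at x)"
proof -
  interpret L: bounded_linear L using jG by (rule has_derivative_bounded_linear)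
  obtain kL where kL: "\<And>h. norm (L h) \<le> norm h * kL" using L.bounded by blast
  define N where "N y = norm (j (G y) - j (G x) - L (y - x)) / norm (y - x)" for y
  define R where "R y = norm (F y - F (G x) - D (j y - j (G x))) / norm (j y - j (G x))" for y
  show ?thesis
  proof (rule has_derivativeI_sandwich[of 1])
    show "bounded_linear (\<lambda>h. D (L h))"
      using L.bounded_linear by (rule bounded_linear_compose[OF blinfun.bounded_linear_right])
  next
    fix y assume "y \<noteq> x"
    then have pos: "norm (y - x) > 0" by simp
    define \<Delta> where "\<Delta> = j (G y) - j (G x)"
    define r where "r = \<Delta> - L (y - x)"
    have "norm (F (G y) - F (G x) - D \<Delta>) \<le> R (G y) * norm \<Delta>"
    proof (cases "\<Delta> = 0")
      case True
      then have "G y = G x" using inj by (simp add: \<Delta>_def inj_eq)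
      then show ?thesis by (simp add: \<Delta>_def)
    qed (simp add: R_def \<Delta>_def)
    also have "\<dots> \<le> R (G y) * ((N y + kL) * norm (y - x))"
    proof (rule mult_left_mono)
      have "norm \<Delta> \<le> norm r + norm (L (y - x))"
        using norm_triangle_ineq[of r "L (y - x)"] by (simp add: r_def)
      also have "\<dots> \<le> (N y + kL) * norm (y - x)"
        using kL[of "y - x"] pos by (simp add: N_def r_def \<Delta>_def algebra_simps)
      finally show "norm \<Delta> \<le> (N y + kL) * norm (y - x)" .
    qed (simp add: R_def)
    finally have "norm (F (G y) - F (G x) - D \<Delta>) \<le> R (G y) * (N y + kL) * norm (y - x)"
      by (simp add: mult.assoc)
    moreover have "norm (D r) \<le> norm D * N y * norm (y - x)"
      using norm_blinfun[of D r] pos by (simp add: N_def r_def \<Delta>_def)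
    moreover have "F (G y) - F (G x) - D (L (y - x)) = (F (G y) - F (G x) - D \<Delta>) + D r"
      by (simp add: r_def blinfun.diff_right)
    ultimately have "norm (F (G y) - F (G x) - D (L (y - x))) \<le> (N y * norm D + R (G y) * (N y + kL)) * norm (y - x)"
      using norm_triangle_ineq[of "F (G y) - F (G x) - D \<Delta>" "D r"] by (simp add: algebra_simps)
    then show "norm (F (G y) - F (G x) - D (L (y - x))) / norm (y - x) \<le> N y * norm D + R (G y) * (N y + kL)"
      using pos by (simp add: divide_le_eq)
  next
    have [tendsto_intros]: "(N \<longlongrightarrow> 0) (at x)"
      using jG unfolding has_derivative_iff_norm N_def by blast
    have [tendsto_intros]: "((\<lambda>y. R (G y)) \<longlongrightarrow> 0) (at x)"
      unfolding R_def using F G[unfolded isCont_def] by (rule filterlim_compose)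
    show "((\<lambda>y. N y * norm D + R (G y) * (N y + kL)) \<longlongrightarrow> 0) (at x)"
      by (intro tendsto_eq_intros) auto
  qed simp
qed

lemma is_chart_inj_on: "is_chart M U \<phi> \<Longrightarrow> inj_on \<phi> U"
  unfolding is_chart_def
  by (metis homeomorphic_imp_injective_map openin_subset topspace_subtopology_subset)

lemma chart_transition_continuous:
  assumes U: "is_chart M U \<phi>" and V: "is_chart M V \<psi>"
  shows "continuous_on (\<phi> ` (U \<inter> V)) (\<psi> \<circ> inv_into U \<phi>)"
proof -
  obtain g where g: "homeomorphic_maps (subtopology M U) (top_of_set (\<phi> ` U)) \<phi> g"
    using U unfolding is_chart_def homeomorphic_map_maps by blast
  have "U \<subseteq> topspace M" using U by (simp add: is_chart_def openin_subset)
  then have g_inv: "g (\<phi> m) = m" if "m \<in> U" for m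
    using g that by (auto simp: homeomorphic_maps_def)
  have "continuous_map (top_of_set (\<phi> ` (U \<inter> V))) (subtopology M U) g"
    using g unfolding homeomorphic_maps_def
    by (metis continuous_map_from_subtopology image_mono inf_le1 subtopology_subtopology Int_absorb1)
  moreover have "g ` \<phi> ` (U \<inter> V) \<subseteq> V" using g_inv by auto
  ultimately have "continuous_map (top_of_set (\<phi> ` (U \<inter> V))) (subtopology M V) g"
    by (auto simp: continuous_map_in_subtopology)
  moreover have "continuous_map (subtopology M V) euclidean \<psi>"
    using V unfolding is_chart_def
    by (metis homeomorphic_imp_continuous_map continuous_map_in_subtopology)
  ultimately have "continuous_on (\<phi> ` (U \<inter> V)) (\<psi> \<circ> g)"
    using continuous_map_compose by fastforce
  moreover have "(\<psi> \<circ> g) x = (\<psi> \<circ> inv_into U \<phi>) x" if "x \<in> \<phi> ` (U \<inter> V)" for x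
    using that g_inv is_chart_inj_on[OF U] by auto
  ultimately show ?thesis using continuous_on_cong by blast
qed

lemma C1_embedded_chart:
  assumes "C1_embedded M M0 j A" "(U, \<phi>) \<in> A" "\<eta> \<in> topspace M0" "\<eta> \<in> U"
  shows "is_chart M U \<phi>" "\<phi> ` (U \<inter> topspace M0) \<subseteq> range j"
    "is_chart M0 (U \<inter> topspace M0) (inv j \<circ> \<phi>)"
proof -
  from assms(1) have charts: "\<forall>(U, \<phi>)\<in>A. is_chart M U \<phi>"
    and restricted: "\<forall>\<eta>\<in>topspace M0. \<forall>(U, \<phi>)\<in>A. \<eta> \<in> U \<longrightarrow>
      \<phi> ` (U \<inter> topspace M0) \<subseteq> range j \<and> is_chart M0 (U \<inter> topspace M0) (inv j \<circ> \<phi>)"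
    unfolding C1_embedded_def by argo+
  from bspec[OF charts assms(2)] show "is_chart M U \<phi>" by simp
  from bspec[OF bspec[OF restricted assms(3)] assms(2)] assms(4)
  show "\<phi> ` (U \<inter> topspace M0) \<subseteq> range j" "is_chart M0 (U \<inter> topspace M0) (inv j \<circ> \<phi>)"
    by simp_all
qed

lemma C1_embedded_transition_frakC1:
  assumes "C1_embedded M M0 j A" "(U, \<phi>) \<in> A" "(V, \<psi>) \<in> A"
    "\<eta> \<in> topspace M0" "\<eta> \<in> U" "\<eta> \<in> V"
  shows "frakC1 j (trans_dom j M0 U \<phi> V) (trans_map j U \<phi> \<psi>)"
proof -
  from assms(1) have "\<forall>\<eta>\<in>topspace M0. \<forall>(U, \<phi>)\<in>A. \<forall>(V, \<psi>)\<in>A. \<eta> \<in> U \<inter> V \<longrightarrow>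
      frakC1 j (trans_dom j M0 U \<phi> V) (trans_map j U \<phi> \<psi>) \<and>
      frakC1 j (trans_dom j M0 V \<psi> U) (trans_map j V \<psi> \<phi>)"
    unfolding C1_embedded_def by argo
  from bspec[OF bspec[OF this assms(4)] assms(2)] have "\<forall>(V, \<psi>)\<in>A. \<eta> \<in> U \<inter> V \<longrightarrow>
      frakC1 j (trans_dom j M0 U \<phi> V) (trans_map j U \<phi> \<psi>) \<and>
      frakC1 j (trans_dom j M0 V \<psi> U) (trans_map j V \<psi> \<phi>)" by simp
  from bspec[OF this assms(3)] assms(5,6) show ?thesis by simp
qed

lemma trans_map_chart_coordinates:
  assumes E: "C1_embedded M M0 j A" and WA: "(W, \<zeta>) \<in> A"
    and \<eta>: "\<eta> \<in> topspace M0" "\<eta> \<in> W" and m: "m \<in> W" "m \<in> topspace M0"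
  shows "j (inv j (\<zeta> m)) = \<zeta> m" and "trans_map j W \<zeta> \<psi> (inv j (\<zeta> m)) = \<psi> m"
proof -
  note W = C1_embedded_chart[OF E WA \<eta>]
  show jx: "j (inv j (\<zeta> m)) = \<zeta> m" using W(2) m by (auto simp: f_inv_into_f)
  show "trans_map j W \<zeta> \<psi> (inv j (\<zeta> m)) = \<psi> m"
    using is_chart_inj_on[OF W(1)] m by (simp add: jx trans_map_def)
qed

lemma trans_map_comp:
  assumes E: "C1_embedded M M0 j A" and VA: "(V, \<psi>) \<in> A" and WA: "(W, \<zeta>) \<in> A"
    and \<eta>: "\<eta> \<in> topspace M0" "\<eta> \<in> V" "\<eta> \<in> W"
    and x: "x \<in> trans_dom j M0 W \<zeta> V"
  shows "j (inv j (trans_map j W \<zeta> \<psi> x)) = trans_map j W \<zeta> \<psi> x"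
    and "trans_map j W \<zeta> \<phi> x = trans_map j V \<psi> \<phi> (inv j (trans_map j W \<zeta> \<psi> x))"
proof -
  obtain m where m: "m \<in> W" "m \<in> V" "m \<in> topspace M0" and x_eq: "x = inv j (\<zeta> m)"
    using x by (auto simp: trans_dom_def)
  note at_W = trans_map_chart_coordinates[OF E WA \<eta>(1,3) m(1,3)]
  and at_V = trans_map_chart_coordinates[OF E VA \<eta>(1,2) m(2,3)]
  show "j (inv j (trans_map j W \<zeta> \<psi> x)) = trans_map j W \<zeta> \<psi> x"
    and "trans_map j W \<zeta> \<phi> x = trans_map j V \<psi> \<phi> (inv j (trans_map j W \<zeta> \<psi> x))"
    by (simp_all add: x_eq at_W at_V)
qed

lemma continuous_on_trans_map_X0:
  assumes E: "C1_embedded M M0 j A" and VA: "(V, \<psi>) \<in> A" and WA: "(W, \<zeta>) \<in> A"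
    and \<eta>: "\<eta> \<in> topspace M0" "\<eta> \<in> V" "\<eta> \<in> W"
  shows "continuous_on (trans_dom j M0 W \<zeta> V) (\<lambda>x. inv j (trans_map j W \<zeta> \<psi> x))"
proof -
  define W0 where "W0 = W \<inter> topspace M0"
  define V0 where "V0 = V \<inter> topspace M0"
  have dom: "trans_dom j M0 W \<zeta> V = (inv j \<circ> \<zeta>) ` (W0 \<inter> V0)"
    by (auto simp: trans_dom_def W0_def V0_def)
  note W0 = C1_embedded_chart(3)[OF E WA \<eta>(1,3), folded W0_def]
  and V0 = C1_embedded_chart(3)[OF E VA \<eta>(1,2), folded V0_def]
  have "continuous_on (trans_dom j M0 W \<zeta> V) ((inv j \<circ> \<psi>) \<circ> inv_into W0 (inv j \<circ> \<zeta>))"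
    unfolding dom by (rule chart_transition_continuous[OF W0 V0])
  moreover have "((inv j \<circ> \<psi>) \<circ> inv_into W0 (inv j \<circ> \<zeta>)) x = inv j (trans_map j W \<zeta> \<psi> x)"
    if x: "x \<in> trans_dom j M0 W \<zeta> V" for x
  proof -
    obtain m where m: "m \<in> W0" "m \<in> V0" and x_eq: "x = inv j (\<zeta> m)"
      using x unfolding dom by auto
    have "inv_into W0 (inv j \<circ> \<zeta>) x = m"
      using inv_into_f_f[OF is_chart_inj_on[OF W0], of m] m by (simp add: x_eq)
    then show ?thesis
      using trans_map_chart_coordinates[OF E WA \<eta>(1,3), of m] m by (simp add: x_eq W0_def)
  qed
  ultimately show ?thesis using continuous_on_cong by force
qed

lemma trans_deriv_self:
  assumes E: "C1_embedded M M0 j A" and UA: "(U, \<phi>) \<in> A"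
    and \<eta>: "\<eta> \<in> topspace M0" "\<eta> \<in> U"
  shows "trans_deriv j M0 U \<phi> U \<phi> \<eta> = id_blinfun"
proof -
  define S where "S = trans_dom j M0 U \<phi> U"
  have dj: "densely_embedded j" using E by (simp add: C1_embedded_def)
  then have bl: "bounded_linear j" by (simp add: densely_embedded_def)
  have S: "open S" "inv j (\<phi> \<eta>) \<in> S"
    using C1_embedded_transition_frakC1[OF E UA UA \<eta> \<eta>(2)] \<eta>
    by (auto simp: S_def frakC1_def trans_dom_def)
  have "j x = trans_map j U \<phi> \<phi> x" if "x \<in> S" for x
    using that trans_map_chart_coordinates[OF E UA \<eta>] by (auto simp: S_def trans_dom_def)
  then have "(trans_map j U \<phi> \<phi> has_derivative j) (at (inv j (\<phi> \<eta>)))"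
    using has_derivative_transform_within_open[OF bounded_linear_imp_has_derivative[OF bl] S(1,2)] by blast
  then have "C1_deriv_at j S (trans_map j U \<phi> \<phi>) (inv j (\<phi> \<eta>)) id_blinfun"
    unfolding C1_deriv_at_iff_has_derivative[OF bl] by (simp add: has_derivative_at_withinI)
  then show ?thesis
    unfolding trans_deriv_def S_def[symmetric] by (rule C1_deriv_eqI[OF dj S])
qed

lemma trans_deriv_comp:
  fixes j :: "'b::banach \<Rightarrow> 'a::banach"
  assumes E: "C1_embedded M M0 j A"
    and UA: "(U, \<phi>) \<in> A" and VA: "(V, \<psi>) \<in> A" and WA: "(W, \<zeta>) \<in> A"
    and \<eta>: "\<eta> \<in> topspace M0" "\<eta> \<in> U" "\<eta> \<in> V" "\<eta> \<in> W"
  shows "trans_deriv j M0 W \<zeta> U \<phi> \<eta> = trans_deriv j M0 V \<psi> U \<phi> \<eta> o\<^sub>L trans_deriv j M0 W \<zeta> V \<psi> \<eta>"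
proof -
  have dj: "densely_embedded j" using E by (simp add: C1_embedded_def)
  then have bl: "bounded_linear j" and inj: "inj j" by (simp_all add: densely_embedded_def)
  define S1 where "S1 = trans_dom j M0 W \<zeta> V"
  define S2 where "S2 = trans_dom j M0 V \<psi> U"
  define S3 where "S3 = trans_dom j M0 W \<zeta> U"
  define F1 where "F1 = trans_map j W \<zeta> \<psi>"
  define F2 where "F2 = trans_map j V \<psi> \<phi>"
  define F3 where "F3 = trans_map j W \<zeta> \<phi>"
  define G where "G x = inv j (F1 x)" for x
  define x0 where "x0 = inv j (\<zeta> \<eta>)"
  define y0 where "y0 = inv j (\<psi> \<eta>)"
  obtain D1 :: "'b \<Rightarrow> ('a \<Rightarrow>\<^sub>L 'a)" where S1: "open S1" and D1: "\<And>x. x \<in> S1 \<Longrightarrow> (F1 has_derivative (\<lambda>h. D1 x (j h))) (at x)"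
      "\<And>x. x \<in> S1 \<Longrightarrow> C1_deriv j S1 F1 x = D1 x"
    using frakC1_has_derivative[OF dj C1_embedded_transition_frakC1[OF E WA VA \<eta>(1,4,3)]]
    unfolding S1_def F1_def by metis
  obtain D2 :: "'b \<Rightarrow> ('a \<Rightarrow>\<^sub>L 'a)" where S2: "open S2" and D2: "continuous_on S2 D2"
      "\<And>y. y \<in> S2 \<Longrightarrow> (F2 has_derivative (\<lambda>h. D2 y (j h))) (at y)"
      "\<And>y. y \<in> S2 \<Longrightarrow> C1_deriv j S2 F2 y = D2 y"
    using frakC1_has_derivative[OF dj C1_embedded_transition_frakC1[OF E VA UA \<eta>(1,3,2)]]
    unfolding S2_def F2_def by metis
  have S3: "open S3"
    using C1_embedded_transition_frakC1[OF E WA UA \<eta>(1,4,2)] by (simp add: S3_def frakC1_def)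
  have x0: "x0 \<in> S1" "x0 \<in> S3" and y0: "y0 \<in> S2"
    using \<eta> by (auto simp: x0_def y0_def S1_def S2_def S3_def trans_dom_def)
  have G_x0: "G x0 = y0"
    using trans_map_chart_coordinates[OF E WA \<eta>(1,4) \<eta>(4,1)] by (simp add: G_def F1_def x0_def y0_def)
  have factor: "j (G x) = F1 x" "F3 x = F2 (G x)" if "x \<in> S1" for x
    using trans_map_comp[OF E VA WA \<eta>(1,3,4), of x] that
    unfolding G_def F1_def F2_def F3_def S1_def by blast+
  have "((\<lambda>x. j (G x)) has_derivative (\<lambda>h. D1 x0 (j h))) (at x0)"
    using has_derivative_transform_within_open[OF D1(1)[OF x0(1)] S1 x0(1)] factor(1) by metis
  moreover have "isCont G x0"
    using continuous_on_trans_map_X0[OF E VA WA \<eta>(1,3,4)] S1 x0(1)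
    unfolding G_def F1_def S1_def by (simp add: continuous_on_eq_continuous_at)
  moreover have "((\<lambda>y. norm (F2 y - F2 (G x0) - D2 y0 (j y - j (G x0))) / norm (j y - j (G x0))) \<longlongrightarrow> 0) (nhds (G x0))"
    unfolding G_x0 using bl S2 y0 D2(2) D2(1) by (rule continuous_derivative_remainder_tendsto)
  ultimately have "((\<lambda>x. F2 (G x)) has_derivative (\<lambda>h. D2 y0 (D1 x0 (j h)))) (at x0)"
    using has_derivative_compose_through_injection[OF inj] by blast
  then have "(F3 has_derivative (\<lambda>h. (D2 y0 o\<^sub>L D1 x0) (j h))) (at x0)"
    using has_derivative_transform_within_open[OF _ S1 x0(1), where g=F3] factor(2) by simp
  then have "C1_deriv j S3 F3 x0 = D2 y0 o\<^sub>L D1 x0"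
    by (intro C1_deriv_eqI[OF dj S3 x0(2)])
      (simp add: C1_deriv_at_iff_has_derivative[OF bl] has_derivative_at_withinI)
  then show ?thesis
    using D1(2)[OF x0(1)] D2(3)[OF y0]
    by (simp add: trans_deriv_def S1_def S2_def S3_def F1_def F2_def F3_def x0_def y0_def)
qed

theorem lemma2p3:
  fixes M M0 M1 :: "'m topology"
    and j :: "'b::banach \<Rightarrow> 'a::banach" and j1 :: "'d::banach \<Rightarrow> 'b"
    and A :: "('m set \<times> ('m \<Rightarrow> 'a)) set"
    and U V W :: "'m set" and \<phi> \<psi> \<zeta> :: "'m \<Rightarrow> 'a" and \<eta> :: 'm
  assumes "banach_manifold M TYPE('a)" and "banach_manifold M0 TYPE('b)"
    and "C1_embedded M M0 j A"
    and "inner_C1_kernel M0 j A M1 j1"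
    and "\<eta> \<in> topspace M0"
    and "(U, \<phi>) \<in> A" and "(V, \<psi>) \<in> A" and "(W, \<zeta>) \<in> A"
    and "\<eta> \<in> U" and "\<eta> \<in> V" and "\<eta> \<in> W"
  shows "trans_deriv j M0 W \<zeta> U \<phi> \<eta> =
           trans_deriv j M0 V \<psi> U \<phi> \<eta> o\<^sub>L trans_deriv j M0 W \<zeta> V \<psi> \<eta>
         \<and> trans_deriv j M0 V \<psi> U \<phi> \<eta> o\<^sub>L trans_deriv j M0 U \<phi> V \<psi> \<eta> = id_blinfun
         \<and> trans_deriv j M0 U \<phi> V \<psi> \<eta> o\<^sub>L trans_deriv j M0 V \<psi> U \<phi> \<eta> = id_blinfun"
  \<comment> \<open>only C1_embedded is used: uniqueness of derivatives comes from density of range j\<close>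
proof (intro conjI)
  note E = assms(3) and \<eta> = assms(5)
  show "trans_deriv j M0 W \<zeta> U \<phi> \<eta> =
      trans_deriv j M0 V \<psi> U \<phi> \<eta> o\<^sub>L trans_deriv j M0 W \<zeta> V \<psi> \<eta>"
    using trans_deriv_comp[OF E assms(6-8) \<eta> assms(9-11)] .
  show "trans_deriv j M0 V \<psi> U \<phi> \<eta> o\<^sub>L trans_deriv j M0 U \<phi> V \<psi> \<eta> = id_blinfun"
    using trans_deriv_comp[OF E assms(6,7,6) \<eta> assms(9,10,9)] trans_deriv_self[OF E assms(6) \<eta> assms(9)]
    by simp
  show "trans_deriv j M0 U \<phi> V \<psi> \<eta> o\<^sub>L trans_deriv j M0 V \<psi> U \<phi> \<eta> = id_blinfun"
    using trans_deriv_comp[OF E assms(7,6,7) \<eta> assms(10,9,10)] trans_deriv_self[OF E assms(7) \<eta> assms(10)]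
    by simp
qed

end
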